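(* Let $\Gamma$ be a group acting by measure class preserving transformations on a standard probability space $(B,\nu)$ such that the action is strongly almost transitive: for every measurable $A\subset B$ with $\nu(A)>0$ there exist $\gamma_n\in\Gamma$ with $\nu(\gamma_n^{-1}A)\to1$. Let $C$ be a standard Borel space with a measurable $\Gamma$-action, and let $\pi_1,\pi_2:B\to C$ be measurable maps with $\pi_i(\gamma x)=\gamma\pi_i(x)$ for all $\gamma\in\Gamma$ and $\nu$-a.e. $x$. Then either $\pi_1(x)=\pi_2(x)$ for $\nu$-a.e. $x\in B$, or the measures $(\pi_1)_*\nu$ and $(\pi_2)_*\nu$ are mutually singular. *)

theory Defs
  imports "HOL-Probability.Probability" "HOL-Algebra.Group"
begin

definition Polish_top :: "'a topology \<Rightarrow> bool" where
  "Polish_top X \<longleftrightarrow> completely_metrizable_space X \<and> separable_space X"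

definition standard_borel :: "'a measure \<Rightarrow> bool" where
  "standard_borel M \<longleftrightarrow>
     (\<exists>X. Polish_top X \<and> topspace X = space M \<and>
          sets M = sigma_sets (topspace X) {U. openin X U})"

definition measurable_action ::
    "('g, 'x) monoid_scheme \<Rightarrow> 'a measure \<Rightarrow> ('g \<Rightarrow> 'a \<Rightarrow> 'a) \<Rightarrow> bool" where
  "measurable_action G M act \<longleftrightarrow>
     (\<forall>g\<in>carrier G. act g \<in> M \<rightarrow>\<^sub>M M) \<and>
     (\<forall>x\<in>space M. act \<one>\<^bsub>G\<^esub> x = x) \<and>
     (\<forall>g\<in>carrier G. \<forall>h\<in>carrier G. \<forall>x\<in>space M.
        act (g \<otimes>\<^bsub>G\<^esub> h) x = act g (act h x))"

definition measure_class_preserving ::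
    "('g, 'x) monoid_scheme \<Rightarrow> 'a measure \<Rightarrow> ('g \<Rightarrow> 'a \<Rightarrow> 'a) \<Rightarrow> bool" where
  "measure_class_preserving G M act \<longleftrightarrow>
     (\<forall>g\<in>carrier G. \<forall>A\<in>sets M.
        emeasure M (act g -` A \<inter> space M) = 0 \<longleftrightarrow> emeasure M A = 0)"

definition strongly_almost_transitive ::
    "('g, 'x) monoid_scheme \<Rightarrow> 'a measure \<Rightarrow> ('g \<Rightarrow> 'a \<Rightarrow> 'a) \<Rightarrow> bool" where
  "strongly_almost_transitive G M act \<longleftrightarrow>
     (\<forall>A\<in>sets M. measure M A > 0 \<longrightarrow>
        (\<exists>g :: nat \<Rightarrow> 'g. (\<forall>n. g n \<in> carrier G) \<and>
           (\<lambda>n. measure M (act (g n) -` A \<inter> space M)) \<longlonglongrightarrow> 1))"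

definition mutually_singular :: "'a measure \<Rightarrow> 'a measure \<Rightarrow> bool" where
  "mutually_singular \<mu> \<nu> \<longleftrightarrow>
     (\<exists>S\<in>sets \<mu>. emeasure \<mu> S = 0 \<and> emeasure \<nu> (space \<nu> - S) = 0)"

end

theory Submission
  imports Defs
begin

(*
  Separate the images by a countable family of Borel sets (C is standard Borel). If the two
  maps do not agree almost everywhere, some member V of the family gives a set
  A = {\<pi>1 \<in> V, \<pi>2 \<notin> V} of positive measure. Strong almost transitivity provides g with
  g\<^sup>-\<^sup>1 A of measure close to 1, and by equivariance g\<^sup>-\<^sup>1 V then carries almost all of
  (\<pi>1)\<^sub>*\<nu> and almost none of (\<pi>2)\<^sub>*\<nu>. Taking errors 2\<^sup>-\<^sup>k, Borel-Cantelli turns this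
  into a set that is null for one measure and conull for the other.
*)

lemma (in Metric_space) second_countable_mtopology:
  assumes "separable_space mtopology"
  shows "second_countable mtopology"
proof -
  obtain C where C: "countable C" "C \<subseteq> M" "mtopology closure_of C = M"
    using assms unfolding separable_space_def by auto
  let ?\<B> = "(\<lambda>(c, q). mball c (real_of_rat q)) ` (C \<times> UNIV)"
  have "\<exists>V\<in>?\<B>. x \<in> V \<and> V \<subseteq> U" if U: "openin mtopology U" "x \<in> U" for U x
  proof -
    obtain r where r: "r > 0" "mball x r \<subseteq> U"
      using U openin_mtopology by blast
    have x: "x \<in> M" using U openin_subset by fastforce
    have "\<forall>s>0. \<exists>c\<in>C. c \<in> mball x s"
      using C(3) x unfolding metric_closure_of by blast
    then obtain c where c: "c \<in> C" "c \<in> mball x (r / 3)"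
      using r(1) by (meson divide_pos_pos zero_less_numeral)
    obtain q where q: "r / 3 < real_of_rat q" "real_of_rat q < 2 * r / 3"
      using of_rat_dense[of "r / 3" "2 * r / 3"] r(1) by auto
    have "mball c (real_of_rat q) \<subseteq> mball x r"
    proof
      fix y assume "y \<in> mball c (real_of_rat q)"
      then show "y \<in> mball x r" using c q triangle[of x c y] by (auto simp: commute)
    qed
    moreover have "x \<in> mball c (real_of_rat q)" using c q x by (auto simp: commute)
    ultimately show ?thesis using c(1) r(2) by (intro bexI[of _ "mball c (real_of_rat q)"]) auto
  qed
  moreover have "countable ?\<B>" using C(1) by auto
  ultimately show ?thesis unfolding second_countable_def
    by (intro exI[of _ ?\<B>]) auto
qed

lemma separable_metrizable_imp_second_countable:
  assumes "metrizable_space X" "separable_space X"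
  shows "second_countable X"
  using assms Metric_space.second_countable_mtopology unfolding metrizable_space_def by blast

definition separates_points :: "'a set set \<Rightarrow> 'a set \<Rightarrow> bool" where
  "separates_points \<U> S \<longleftrightarrow> (\<forall>x\<in>S. \<forall>y\<in>S. x \<noteq> y \<longrightarrow> (\<exists>V\<in>\<U>. x \<in> V \<and> y \<notin> V))"

lemma second_countable_t1_imp_countable_separating_opens:
  assumes "second_countable X" "t1_space X"
  obtains \<U> where "countable \<U>" "\<And>V. V \<in> \<U> \<Longrightarrow> openin X V" "separates_points \<U> (topspace X)"
proof -
  obtain \<B> where \<B>: "countable \<B>" "\<forall>V\<in>\<B>. openin X V"
    "\<And>U x. openin X U \<Longrightarrow> x \<in> U \<Longrightarrow> \<exists>V\<in>\<B>. x \<in> V \<and> V \<subseteq> U"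
    using assms(1) unfolding second_countable_def by metis
  have "separates_points \<B> (topspace X)"
    unfolding separates_points_def
  proof (intro ballI impI)
    fix x y assume "x \<in> topspace X" "y \<in> topspace X" "x \<noteq> y"
    then obtain U where "openin X U" "x \<in> U" "y \<notin> U"
      using assms(2) unfolding t1_space_def by blast
    then show "\<exists>V\<in>\<B>. x \<in> V \<and> y \<notin> V" using \<B>(3) by blast
  qed
  then show thesis using that \<B> by blast
qed

lemma standard_borel_countable_separating_sets:
  assumes "standard_borel C"
  obtains \<U> where "countable \<U>" "\<U> \<subseteq> sets C" "separates_points \<U> (space C)"
proof -
  obtain X where X: "Polish_top X" "topspace X = space C"
    "sets C = sigma_sets (topspace X) {U. openin X U}"
    using assms unfolding standard_borel_def by blast
  have "metrizable_space X" "separable_space X"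
    using X(1) completely_metrizable_imp_metrizable_space unfolding Polish_top_def by auto
  then obtain \<U> where "countable \<U>" "\<And>V. V \<in> \<U> \<Longrightarrow> openin X V" "separates_points \<U> (space C)"
    using second_countable_t1_imp_countable_separating_opens metrizable_imp_t1_space
      separable_metrizable_imp_second_countable X(2) by metis
  moreover have "\<U> \<subseteq> sets C" using calculation(2) X(3) by auto
  ultimately show thesis using that by blast
qed

lemma AE_eq_if_separating_sets_null:
  assumes "countable \<U>" "\<U> \<subseteq> sets N" "separates_points \<U> (space N)"
    and f: "f \<in> M \<rightarrow>\<^sub>M N" and g: "g \<in> M \<rightarrow>\<^sub>M N"
    and null: "\<And>V. V \<in> \<U> \<Longrightarrow> {x\<in>space M. f x \<in> V \<and> g x \<notin> V} \<in> null_sets M"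
  shows "AE x in M. f x = g x"
proof (rule AE_I')
  show "(\<Union>V\<in>\<U>. {x\<in>space M. f x \<in> V \<and> g x \<notin> V}) \<in> null_sets M"
    using assms(1) null by (intro null_sets_UN') auto
  show "{x\<in>space M. f x \<noteq> g x} \<subseteq> (\<Union>V\<in>\<U>. {x\<in>space M. f x \<in> V \<and> g x \<notin> V})"
    using assms(3) measurable_space[OF f] measurable_space[OF g]
    unfolding separates_points_def by (auto simp: Pi_iff)
qed

lemma mutually_singularI:
  assumes "finite_measure \<mu>" "finite_measure \<nu>" "sets \<mu> = sets \<nu>"
    and small: "\<And>\<epsilon>. \<epsilon> > 0 \<Longrightarrow> \<exists>F\<in>sets \<mu>. measure \<mu> (space \<mu> - F) < \<epsilon> \<and> measure \<nu> F < \<epsilon>"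
  shows "mutually_singular \<mu> \<nu>"
proof -
  interpret \<mu>: finite_measure \<mu> by fact
  interpret \<nu>: finite_measure \<nu> by fact
  have "\<exists>F\<in>sets \<mu>. measure \<mu> (space \<mu> - F) < (1/2)^k \<and> measure \<nu> F < (1/2)^k" for k :: nat
    using small by simp
  then obtain F where F: "\<And>k. F k \<in> sets \<mu>"
    "\<And>k. measure \<mu> (space \<mu> - F k) < (1/2)^k" "\<And>k. measure \<nu> (F k) < (1/2)^k"
    by metis
  have geometric: "summable (\<lambda>k. (1/2::real)^k)" by simp
  define S where "S = limsup (\<lambda>k. space \<mu> - F k)"
  have S_null: "S \<in> null_sets \<mu>"
    unfolding S_def
  proof (rule borel_cantelli_limsup1)
    show "summable (\<lambda>k. measure \<mu> (space \<mu> - F k))"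
      using F(2) by (intro summable_comparison_test'[OF geometric]) (simp add: less_imp_le)
  qed (use F(1) in \<open>simp_all add: \<mu>.emeasure_eq_measure\<close>)
  have limsup_null: "limsup F \<in> null_sets \<nu>"
  proof (rule borel_cantelli_limsup1)
    show "summable (\<lambda>k. measure \<nu> (F k))"
      using F(3) by (intro summable_comparison_test'[OF geometric]) (simp add: less_imp_le)
  qed (use F(1) assms(3) in \<open>simp_all add: \<nu>.emeasure_eq_measure\<close>)
  have "space \<nu> - S \<subseteq> limsup F"
  proof
    fix x assume "x \<in> space \<nu> - S"
    then obtain m where "\<And>k. k \<ge> m \<Longrightarrow> x \<in> F k"
      using sets_eq_imp_space_eq[OF assms(3)] by (auto simp: S_def limsup_INF_SUP)
    then have "\<forall>j. \<exists>k\<ge>j. x \<in> F k" by (meson max.cobounded1 max.cobounded2)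
    then show "x \<in> limsup F"
      unfolding limsup_INF_SUP by auto
  qed
  then have "space \<nu> - S \<in> null_sets \<nu>"
    using null_sets_subset[OF limsup_null] S_null assms(3) by auto
  then show ?thesis
    unfolding mutually_singular_def using S_null by auto
qed

lemma measurable_action_measurable:
  "measurable_action G M act \<Longrightarrow> g \<in> carrier G \<Longrightarrow> act g \<in> M \<rightarrow>\<^sub>M M"
  unfolding measurable_action_def by blast

lemma strongly_almost_transitive_translate_near_one:
  assumes "strongly_almost_transitive G M act" "A \<in> sets M" "measure M A > 0" "\<epsilon> > 0"
  obtains g where "g \<in> carrier G" "measure M (act g -` A \<inter> space M) > 1 - \<epsilon>"
proof -
  obtain \<gamma> where \<gamma>: "\<And>n. \<gamma> n \<in> carrier G"
      "(\<lambda>n. measure M (act (\<gamma> n) -` A \<inter> space M)) \<longlonglongrightarrow> 1"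
    using assms(1-3) unfolding strongly_almost_transitive_def by blast
  have "1 - \<epsilon> < 1" using assms(4) by simp
  from order_tendstoD(1)[OF \<gamma>(2) this]
  obtain n where "measure M (act (\<gamma> n) -` A \<inter> space M) > 1 - \<epsilon>"
    by (auto dest: eventually_happens)
  then show thesis using that \<gamma>(1) by blast
qed

lemma equivariant_translate_separates_distr:
  assumes "prob_space M" and f: "f \<in> M \<rightarrow>\<^sub>M N" and g: "g \<in> M \<rightarrow>\<^sub>M N"
    and a: "a \<in> M \<rightarrow>\<^sub>M M" and c: "c \<in> N \<rightarrow>\<^sub>M N"
    and f_equiv: "AE x in M. f (a x) = c (f x)" and g_equiv: "AE x in M. g (a x) = c (g x)"
    and V: "V \<in> sets N"
  defines "E \<equiv> a -` {x\<in>space M. f x \<in> V \<and> g x \<notin> V} \<inter> space M"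
    and "F \<equiv> c -` V \<inter> space N"
  shows "measure (distr M N f) (space N - F) \<le> 1 - measure M E"
    and "measure (distr M N g) F \<le> 1 - measure M E"
proof -
  interpret M: prob_space M by fact
  have F: "F \<in> sets N" unfolding F_def using c V by (rule measurable_sets)
  have E: "E \<in> sets M" unfolding E_def using a f g V by measurable
  have "AE x in M. x \<in> E \<longrightarrow> x \<in> f -` F \<inter> space M"
    using f_equiv by eventually_elim (use f in \<open>auto simp: E_def F_def measurable_def\<close>)
  then have "measure M E \<le> measure M (f -` F \<inter> space M)"
    using f F E by (intro M.finite_measure_mono_AE) auto
  also have "\<dots> = 1 - measure (distr M N f) (space N - F)"
    using f F M.prob_space_distr[OF f] prob_space.prob_compl[of "distr M N f" F]
    by (simp add: measure_distr)
  finally show "measure (distr M N f) (space N - F) \<le> 1 - measure M E" by simp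
  have "AE x in M. x \<in> g -` F \<inter> space M \<longrightarrow> x \<in> space M - E"
    using g_equiv by eventually_elim (use g in \<open>auto simp: E_def F_def measurable_def\<close>)
  then have "measure M (g -` F \<inter> space M) \<le> measure M (space M - E)"
    using E by (intro M.finite_measure_mono_AE) auto
  then show "measure (distr M N g) F \<le> 1 - measure M E"
    using g F E M.prob_compl by (simp add: measure_distr)
qed

theorem lemma7p2:
  fixes G :: "('g, 'x) monoid_scheme"
    and B :: "'b measure" and C :: "'c measure"
    and actB :: "'g \<Rightarrow> 'b \<Rightarrow> 'b" and actC :: "'g \<Rightarrow> 'c \<Rightarrow> 'c"
    and \<pi>1 \<pi>2 :: "'b \<Rightarrow> 'c"
  assumes "group G"
    and "prob_space B" and "standard_borel B"
    and "measurable_action G B actB"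
    and "measure_class_preserving G B actB"
    and "strongly_almost_transitive G B actB"
    and "standard_borel C"
    and "measurable_action G C actC"
    and "\<pi>1 \<in> B \<rightarrow>\<^sub>M C" and "\<pi>2 \<in> B \<rightarrow>\<^sub>M C"
    and "\<And>g. g \<in> carrier G \<Longrightarrow> AE x in B. \<pi>1 (actB g x) = actC g (\<pi>1 x)"
    and "\<And>g. g \<in> carrier G \<Longrightarrow> AE x in B. \<pi>2 (actB g x) = actC g (\<pi>2 x)"
  shows "(AE x in B. \<pi>1 x = \<pi>2 x) \<or> mutually_singular (distr B C \<pi>1) (distr B C \<pi>2)"
proof (cases "AE x in B. \<pi>1 x = \<pi>2 x")
  case not_AE: False
  interpret B: prob_space B by fact
  obtain \<U> where \<U>: "countable \<U>" "\<U> \<subseteq> sets C" "separates_points \<U> (space C)"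
    using standard_borel_countable_separating_sets assms(7) by blast
  define A where "A V = {x\<in>space B. \<pi>1 x \<in> V \<and> \<pi>2 x \<notin> V}" for V
  obtain V where V: "V \<in> \<U>" "A V \<notin> null_sets B"
    using AE_eq_if_separating_sets_null[OF \<U> assms(9,10)] not_AE unfolding A_def by blast
  have V_sets: "V \<in> sets C" using \<U>(2) V(1) by blast
  then have A_sets: "A V \<in> sets B" unfolding A_def using assms(9,10) by measurable
  have A_pos: "measure B (A V) > 0"
    using V(2) A_sets by (simp add: null_sets_def B.emeasure_eq_measure zero_less_measure_iff)
  have "mutually_singular (distr B C \<pi>1) (distr B C \<pi>2)"
  proof (rule mutually_singularI)
    fix \<epsilon> :: real assume "\<epsilon> > 0"
    then obtain g where g: "g \<in> carrier G" "measure B (actB g -` A V \<inter> space B) > 1 - \<epsilon>"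
      using strongly_almost_transitive_translate_near_one assms(6) A_sets A_pos by blast
    note actB = measurable_action_measurable[OF assms(4) g(1)]
    note actC = measurable_action_measurable[OF assms(8) g(1)]
    let ?W = "actC g -` V \<inter> space C"
    have "?W \<in> sets C" using actC V_sets by (rule measurable_sets)
    then show "\<exists>F\<in>sets (distr B C \<pi>1).
        measure (distr B C \<pi>1) (space (distr B C \<pi>1) - F) < \<epsilon> \<and> measure (distr B C \<pi>2) F < \<epsilon>"
      using g(2) equivariant_translate_separates_distr[OF assms(2,9,10) actB actC
        assms(11,12)[OF g(1)] V_sets]
      unfolding A_def by (intro bexI[of _ ?W]) auto
  qed (use assms(9,10) in \<open>simp_all add: B.finite_measure_distr\<close>)
  then show ?thesis ..
qed simp

end
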